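(* Let $A=\{0,1\}+3\mathbb{Z}=\{n\in\mathbb{Z}: n\equiv 0 \text{ or } 1 \pmod 3\}$. Then $h(A^2)=8$.
   Context: For a set $X\subseteq\mathbb{R}^d$, the Helly number $h(X)$ is the smallest $h$ such that the following holds: for every finite family $\mathcal{F}$ of convex sets in $\mathbb{R}^d$, if every $h$ or fewer sets of $\mathcal{F}$ have a point of $X$ in their intersection, then the intersection of all sets of $\mathcal{F}$ contains a point of $X$. If no such $h$ exists, $h(X)=\infty$. Equivalently (for discrete $X$), $h(X)$ equals the maximum size of a set $T\subseteq X$ such that $\mathrm{conv}(T)\cap X$ consists only of vertices of $\mathrm{conv}(T)$. *)

theory Defs
  imports "HOL-Analysis.Analysis" "HOL-Library.Extended_Nat"
begin

definition helly_prop :: "'a::real_vector set \<Rightarrow> nat \<Rightarrow> bool" where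
  "helly_prop X h \<longleftrightarrow>
     (\<forall>F. finite F \<and> (\<forall>C\<in>F. convex C) \<and>
          (\<forall>G\<subseteq>F. card G \<le> h \<longrightarrow> \<Inter>G \<inter> X \<noteq> {})
          \<longrightarrow> \<Inter>F \<inter> X \<noteq> {})"

definition helly_number :: "'a::real_vector set \<Rightarrow> enat" where
  "helly_number X = (if \<exists>h. helly_prop X h then enat (LEAST h. helly_prop X h) else \<infinity>)"

definition A01 :: "real set" where
  "A01 = {of_int n | n::int. n mod 3 = 0 \<or> n mod 3 = 1}"

end

(*
  Let G be a minimal family of convex sets whose intersection misses S while all smaller
  subfamilies meet in S. Choosing a point of S in the intersection of all members but C, for each
  C in G, gives |G| points of S with no point of S in every hull of all but one of them. Hence
  helly_prop S h holds iff for every (h + 1)-subset Y of S some point of S lies in all the hulls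
  conv (Y - {y}). When S meets each polytope in a finite set, this follows as soon as no such Y is
  hollow, by a descent on |S \<inter> conv Y| that trades a vertex of Y for a point of S inside conv Y.

  Among nine points of A \<times> A three are congruent modulo 3, and one of the points (2a + b)/3 with
  a \<noteq> b among them, or their centroid, lies again in A \<times> A; so no nine points are hollow and
  h(A \<times> A) \<le> 8. The octagon below shows h(A \<times> A) > 7: the hull of any seven of its vertices lies
  in a half-plane, and the eight half-planes have no common point in A \<times> A.
*)

theory Submission
  imports Defs
begin

section \<open>Helly numbers through leave-one-out hulls\<close>

definition hull_core :: "'a::real_vector set \<Rightarrow> 'a set" where
  "hull_core Y = (\<Inter>y\<in>Y. convex hull (Y - {y}))"

lemma in_hull_core_if_in_convex_hull_delete:
  assumes "y \<in> Y" "y \<in> convex hull (Y - {y})"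
  shows "y \<in> hull_core Y"
  unfolding hull_core_def using assms by (auto intro: hull_inc)

lemma hull_core_subset_INT:
  assumes "Y \<noteq> {}" "Y \<subseteq> x ` I" "\<And>i. i \<in> I \<Longrightarrow> convex (C i)"
    "\<And>i j. i \<in> I \<Longrightarrow> j \<in> I \<Longrightarrow> j \<noteq> i \<Longrightarrow> x j \<in> C i"
  shows "hull_core Y \<subseteq> (\<Inter>i\<in>I. C i)"
proof (intro subsetI INT_I)
  fix w i assume w: "w \<in> hull_core Y" and i: "i \<in> I"
  obtain y where "y \<in> Y" and y: "x i \<in> Y \<Longrightarrow> y = x i"
    using assms(1) by blast
  have "Y - {y} \<subseteq> C i"
    using assms(2,4) i y by fastforce
  then have "convex hull (Y - {y}) \<subseteq> C i"
    by (simp add: assms(3) hull_minimal i)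
  then show "w \<in> C i"
    using w \<open>y \<in> Y\<close> unfolding hull_core_def by blast
qed

lemma helly_prop_mono: "helly_prop X h \<Longrightarrow> h \<le> h' \<Longrightarrow> helly_prop X h'"
  unfolding helly_prop_def by (meson order_trans)

lemma obtain_critical_subfamily:
  assumes "finite F" "\<Inter>F \<inter> S = {}"
  obtains G x where "G \<subseteq> F" "\<Inter>G \<inter> S = {}" "\<forall>C\<in>G. x C \<in> \<Inter>(G - {C}) \<inter> S"
proof -
  obtain G where "G \<subseteq> F \<and> \<Inter>G \<inter> S = {}"
    and G_min: "\<forall>G'. G' \<subseteq> F \<and> \<Inter>G' \<inter> S = {} \<longrightarrow> card G \<le> card G'"
    using ex_has_least_nat[of "\<lambda>G. G \<subseteq> F \<and> \<Inter>G \<inter> S = {}" F card] assms(2) by auto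
  then have "G \<subseteq> F" and G: "\<Inter>G \<inter> S = {}"
    by auto
  have "finite G"
    using assms(1) \<open>G \<subseteq> F\<close> finite_subset by blast
  have "\<exists>p. p \<in> \<Inter>(G - {C}) \<inter> S" if "C \<in> G" for C
  proof (rule ccontr)
    assume "\<nexists>p. p \<in> \<Inter>(G - {C}) \<inter> S"
    then have "\<Inter>(G - {C}) \<inter> S = {}"
      by blast
    then have "card G \<le> card (G - {C})"
      using G_min[rule_format, of "G - {C}"] \<open>G \<subseteq> F\<close> by blast
    then show False
      using card_Diff1_less[OF \<open>finite G\<close> that] by simp
  qed
  then obtain x where "\<forall>C\<in>G. x C \<in> \<Inter>(G - {C}) \<inter> S"
    by metis
  then show ?thesis
    by (rule that[OF \<open>G \<subseteq> F\<close> G])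
qed

lemma helly_prop_if_hull_core:
  assumes core: "\<And>Y. Y \<subseteq> S \<Longrightarrow> card Y = Suc h \<Longrightarrow> S \<inter> hull_core Y \<noteq> {}"
  shows "helly_prop S h"
  unfolding helly_prop_def
proof (intro allI impI, elim conjE)
  fix F :: "'a set set"
  assume "finite F" and convex: "\<forall>C\<in>F. convex C"
    and small: "\<forall>G\<subseteq>F. card G \<le> h \<longrightarrow> \<Inter>G \<inter> S \<noteq> {}"
  show "\<Inter>F \<inter> S \<noteq> {}"
  proof
    assume "\<Inter>F \<inter> S = {}"
    with \<open>finite F\<close> obtain G x where "G \<subseteq> F" and G: "\<Inter>G \<inter> S = {}"
      and "\<forall>C\<in>G. x C \<in> \<Inter>(G - {C}) \<inter> S"
      by (rule obtain_critical_subfamily)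
    then have x: "x C \<in> \<Inter>(G - {C}) \<inter> S" if "C \<in> G" for C
      using that by blast
    have "x C \<notin> C" if "C \<in> G" for C
    proof
      assume "x C \<in> C"
      then have "x C \<in> \<Inter>G \<inter> S"
        using x[OF that] by auto
      then show False
        using G by simp
    qed
    then have "inj_on x G"
      using x by (intro inj_onI) (metis Diff_iff IntD1 InterD singletonD)
    moreover have "Suc h \<le> card G"
      using small \<open>G \<subseteq> F\<close> G by (metis not_less_eq_eq)
    ultimately obtain Y where "Y \<subseteq> x ` G" and Y: "card Y = Suc h"
      by (metis card_image obtain_subset_with_card_n)
    have "Y \<subseteq> S"
      using \<open>Y \<subseteq> x ` G\<close> x by blast
    have "hull_core Y \<subseteq> (\<Inter>C\<in>G. C)"
    proof (rule hull_core_subset_INT[where x = x])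
      show "Y \<noteq> {}"
        using Y by auto
      show "convex C" if "C \<in> G" for C
        using that convex \<open>G \<subseteq> F\<close> by blast
      show "x D \<in> C" if "C \<in> G" "D \<in> G" "D \<noteq> C" for C D
        using x[OF that(2)] that by blast
    qed fact
    then show False
      using core[OF \<open>Y \<subseteq> S\<close> Y] G by blast
  qed
qed

lemma not_helly_prop_if_hull_core:
  assumes "T \<subseteq> S" "card T = Suc h" "S \<inter> hull_core T = {}"
  shows "\<not> helly_prop S h"
proof
  define F where "F = (\<lambda>t. convex hull (T - {t})) ` T"
  have "finite T"
    using assms(2) card_ge_0_finite by force
  have "inj_on (\<lambda>t. convex hull (T - {t})) T"
  proof (rule inj_onI, rule ccontr)
    fix s t assume "s \<in> T" "t \<in> T" "convex hull (T - {s}) = convex hull (T - {t})" "s \<noteq> t"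
    then have "s \<in> hull_core T"
      by (metis hull_inc in_hull_core_if_in_convex_hull_delete insert_Diff insert_iff)
    then show False
      using assms(1,3) \<open>s \<in> T\<close> by blast
  qed
  then have "card F = Suc h"
    by (simp add: F_def card_image assms(2))
  assume "helly_prop S h"
  moreover have "\<Inter>G \<inter> S \<noteq> {}" if G: "G \<subseteq> F" "card G \<le> h" for G
  proof -
    have "G \<noteq> F"
      using G \<open>card F = Suc h\<close> by auto
    then obtain t where "t \<in> T" "convex hull (T - {t}) \<notin> G"
      using G(1) unfolding F_def by blast
    then have "t \<in> \<Inter>G"
      using G(1) by (auto simp: F_def intro: hull_inc)
    then show ?thesis
      using assms(1) \<open>t \<in> T\<close> by blast
  qed
  ultimately have "\<Inter>F \<inter> S \<noteq> {}"
    unfolding helly_prop_def F_def using \<open>finite T\<close> by auto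
  then show False
    using assms(3) by (auto simp: F_def hull_core_def)
qed

lemma helly_number_eq_Suc:
  assumes "helly_prop S (Suc h)" "\<not> helly_prop S h"
  shows "helly_number S = enat (Suc h)"
proof -
  have "(LEAST h. helly_prop S h) = Suc h"
    by (rule Least_equality) (use assms helly_prop_mono not_less_eq_eq in blast)+
  then show ?thesis
    using assms(1) by (auto simp: helly_number_def)
qed

section \<open>Hollow sets\<close>

text \<open>For \<open>Y \<subseteq> S\<close> this says that \<open>S \<inter> convex hull Y\<close> consists of vertices of
  \<open>convex hull Y\<close>.\<close>

definition hollow :: "'a::real_vector set \<Rightarrow> 'a set \<Rightarrow> bool" where
  "hollow S Y \<longleftrightarrow> (\<forall>z\<in>S. z \<notin> convex hull (Y - {z}))"

lemma not_hollow_if_in_convex_hull: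
  assumes "z \<in> S" "z \<in> convex hull P" "P \<subseteq> Y" "z \<notin> P"
  shows "\<not> hollow S Y"
proof -
  have "convex hull P \<subseteq> convex hull (Y - {z})"
    using assms(3,4) by (intro hull_mono) blast
  then show ?thesis
    using assms(1,2) unfolding hollow_def by blast
qed

lemma not_hollow_if_in_open_segment:
  assumes "z \<in> S" "z \<in> open_segment p q" "p \<in> Y" "q \<in> Y"
  shows "\<not> hollow S Y"
proof (rule not_hollow_if_in_convex_hull[OF assms(1)])
  show "z \<in> convex hull {p, q}" "z \<notin> {p, q}"
    using assms(2) by (auto simp: open_segment_def segment_convex_hull)
qed (use assms in auto)

lemma not_hollow_two_thirds:
  fixes p q :: "'a::real_vector"
  assumes "p \<in> Y" "q \<in> Y" "p \<noteq> q" "(2/3) *\<^sub>R p + (1/3) *\<^sub>R q \<in> S"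
  shows "\<not> hollow S Y"
proof (rule not_hollow_if_in_open_segment[OF assms(4) _ assms(1,2)])
  show "(2/3) *\<^sub>R p + (1/3) *\<^sub>R q \<in> open_segment p q"
    unfolding in_segment(2) using assms(3) by (intro conjI exI[of _ "1/3"]) auto
qed

lemma not_hollow_centroid:
  fixes p q t :: "'a::real_vector"
  assumes "p \<in> Y" "q \<in> Y" "t \<in> Y" "p \<noteq> q" "p \<noteq> t" "q \<noteq> t"
    and "(1/3) *\<^sub>R (p + q + t) \<in> S"
  shows "\<not> hollow S Y"
proof -
  let ?z = "(1/3) *\<^sub>R (p + q + t)"
  have vertex_case: "\<not> hollow S Y"
    if "a \<in> S" "b \<in> Y" "c \<in> Y" "b \<noteq> c" "3 *\<^sub>R a = a + b + c" for a b c
  proof (rule not_hollow_if_in_open_segment[OF \<open>a \<in> S\<close> _ that(2,3)])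
    have "3 *\<^sub>R a = 2 *\<^sub>R a + a"
      by (simp add: scaleR_left_distrib[of 2 1, simplified, symmetric])
    then have "2 *\<^sub>R a = b + c"
      using that(5) by (simp add: add.assoc)
    then have "a = midpoint b c"
      unfolding midpoint_def by (simp flip: \<open>2 *\<^sub>R a = b + c\<close>)
    then show "a \<in> open_segment b c"
      using that(4) by simp
  qed
  have z: "3 *\<^sub>R ?z = p + q + t"
    by simp
  consider "?z = p" | "?z = q" | "?z = t" | "?z \<notin> {p, q, t}"
    by blast
  then show ?thesis
  proof cases
    case 1
    then show ?thesis
      using vertex_case[of p q t] z assms by simp
  next
    case 2
    then show ?thesis
      using vertex_case[of q p t] z assms by (simp add: add_ac)
  next
    case 3
    then show ?thesis
      using vertex_case[of t p q] z assms by (simp add: add_ac)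
  next
    case 4
    moreover have "?z \<in> convex hull {p, q, t}"
      unfolding convex_hull_3 by (intro CollectI exI[of _ "1/3"]) (simp add: scaleR_add_right)
    ultimately show ?thesis
      using assms by (intro not_hollow_if_in_convex_hull[of ?z S "{p, q, t}"]) auto
  qed
qed

lemma not_in_convex_hull_exchange:
  fixes B :: "'a::real_vector set"
  assumes "finite B" "p \<notin> convex hull B" "z \<in> convex hull (insert p B)" "z \<noteq> p"
  shows "p \<notin> convex hull (insert z B)"
proof
  assume p: "p \<in> convex hull (insert z B)"
  have "convex hull (insert z B) \<subseteq> convex hull (insert p B)"
    by (rule hull_minimal) (auto simp: assms(3) hull_inc convex_convex_hull)
  moreover have "p extreme_point_of convex hull (insert p B)"
    using extreme_point_of_convex_hull_insert assms(1,2) by blast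
  ultimately have "p extreme_point_of convex hull (insert z B)"
    using p unfolding extreme_point_of_def by blast
  then have "p \<in> insert z B"
    by (rule extreme_point_of_convex_hull)
  then show False
    using assms(2,4) hull_inc by fastforce
qed

lemma convex_hull_exchange:
  assumes "finite Y" "p \<in> Y" "p \<notin> convex hull (Y - {p})" "z \<in> convex hull Y" "z \<notin> Y"
  shows "card (insert z (Y - {p})) = card Y"
    and "convex hull (insert z (Y - {p})) \<subseteq> convex hull Y"
    and "p \<notin> convex hull (insert z (Y - {p}))"
proof -
  show "card (insert z (Y - {p})) = card Y"
    using card.remove[OF assms(1,2)] assms(1,5) by simp
  show "convex hull (insert z (Y - {p})) \<subseteq> convex hull Y"
    using assms(4) by (intro hull_minimal) (auto intro: hull_inc simp: convex_convex_hull)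
  show "p \<notin> convex hull (insert z (Y - {p}))"
    using assms by (intro not_in_convex_hull_exchange) (auto simp: insert_absorb)
qed

lemma hull_core_exchange:
  assumes "finite Y" and vertices: "\<And>y. y \<in> Y \<Longrightarrow> y \<notin> convex hull (Y - {y})"
    and z: "z \<in> convex hull Y" "z \<notin> Y" and "p \<in> Y"
    and w: "w \<in> hull_core (insert z (Y - {p}))"
  shows "w \<in> convex hull Y - Y"
    and "{u\<in>Y. w \<notin> convex hull (Y - {u})} \<subseteq> {u\<in>Y. z \<notin> convex hull (Y - {u})} - {p}"
proof -
  have w_in: "w \<in> convex hull (insert z (Y - {p}) - {u})" if "u \<in> insert z (Y - {p})" for u
    using w that unfolding hull_core_def by blast
  have w_p: "w \<in> convex hull (Y - {p})"
    using w_in[of z] z(2) by (simp add: insert_Diff_if)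
  show "{u\<in>Y. w \<notin> convex hull (Y - {u})} \<subseteq> {u\<in>Y. z \<notin> convex hull (Y - {u})} - {p}"
  proof
    fix u assume "u \<in> {u\<in>Y. w \<notin> convex hull (Y - {u})}"
    then have "u \<in> Y" "w \<notin> convex hull (Y - {u})"
      by auto
    moreover have "u \<noteq> p"
      using w_p calculation by blast
    moreover have "convex hull (insert z (Y - {p}) - {u}) \<subseteq> convex hull (Y - {u})"
      if "z \<in> convex hull (Y - {u})"
      using that by (intro hull_minimal) (auto intro: hull_inc simp: convex_convex_hull)
    ultimately show "u \<in> {u\<in>Y. z \<notin> convex hull (Y - {u})} - {p}"
      using w_in[of u] by auto
  qed
  have "w \<notin> Y"
  proof
    assume "w \<in> Y"
    have "w \<noteq> p"
      using vertices[OF \<open>p \<in> Y\<close>] w_p by blast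
    then have "w \<in> convex hull (insert z (Y - {p}) - {w})"
      using w_in \<open>w \<in> Y\<close> by blast
    also have "\<dots> \<subseteq> convex hull (insert z (Y - {w}))"
      by (intro hull_mono) blast
    finally show False
      using not_in_convex_hull_exchange[of "Y - {w}" w z] assms(1) vertices[OF \<open>w \<in> Y\<close>] z
        \<open>w \<in> Y\<close> by (auto simp: insert_absorb)
  qed
  moreover have "w \<in> convex hull Y"
    using w_p hull_mono[of "Y - {p}" Y] by blast
  ultimately show "w \<in> convex hull Y - Y"
    by blast
qed

text \<open>Take \<open>z \<in> S \<inter> convex hull Y\<close> outside \<open>Y\<close> lying in as many of the hulls
  \<open>convex hull (Y - {u})\<close> as possible, and exchange for \<open>z\<close> a vertex \<open>p\<close> with
  \<open>z \<notin> convex hull (Y - {p})\<close>. The new set has fewer points of \<open>S\<close> in its hull, and a point of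
  its core lies in strictly more of these hulls than \<open>z\<close>.\<close>

lemma hull_core_meets_by_exchange:
  assumes locally_finite: "\<And>Y. finite Y \<Longrightarrow> finite (S \<inter> convex hull Y)"
    and "Y \<subseteq> S" "finite Y" and vertices: "\<And>y. y \<in> Y \<Longrightarrow> y \<notin> convex hull (Y - {y})"
    and "z\<^sub>0 \<in> S - Y" "z\<^sub>0 \<in> convex hull Y"
    and smaller: "\<And>Y'. Y' \<subseteq> S \<Longrightarrow> finite Y' \<Longrightarrow> card Y' = card Y \<Longrightarrow>
      card (S \<inter> convex hull Y') < card (S \<inter> convex hull Y) \<Longrightarrow> S \<inter> hull_core Y' \<noteq> {}"
  shows "S \<inter> hull_core Y \<noteq> {}"
proof
  assume core: "S \<inter> hull_core Y = {}"
  let ?miss = "\<lambda>z. {u\<in>Y. z \<notin> convex hull (Y - {u})}"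
  obtain z where z: "z \<in> S - Y \<and> z \<in> convex hull Y"
    and z_min: "\<forall>z'. z' \<in> S - Y \<and> z' \<in> convex hull Y \<longrightarrow> card (?miss z) \<le> card (?miss z')"
    using ex_has_least_nat[of "\<lambda>z. z \<in> S - Y \<and> z \<in> convex hull Y" z\<^sub>0 "\<lambda>z. card (?miss z)"]
      assms(5,6) by auto
  obtain p where "p \<in> Y" "z \<notin> convex hull (Y - {p})"
    using core z unfolding hull_core_def by blast
  note exchange = convex_hull_exchange[OF \<open>finite Y\<close> \<open>p \<in> Y\<close> vertices[OF \<open>p \<in> Y\<close>], of z]
  have "p \<in> S \<inter> convex hull Y"
    using \<open>p \<in> Y\<close> \<open>Y \<subseteq> S\<close> hull_inc[of p Y] by blast
  then have "card (S \<inter> convex hull (insert z (Y - {p}))) < card (S \<inter> convex hull Y)"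
    using exchange(2,3) z by (intro psubset_card_mono locally_finite \<open>finite Y\<close>) blast+
  moreover have "insert z (Y - {p}) \<subseteq> S"
    using \<open>Y \<subseteq> S\<close> z by blast
  ultimately obtain w where "w \<in> S" and w: "w \<in> hull_core (insert z (Y - {p}))"
    using smaller[of "insert z (Y - {p})"] exchange(1) \<open>finite Y\<close> z by blast
  note w_exchange = hull_core_exchange[OF \<open>finite Y\<close> vertices _ _ \<open>p \<in> Y\<close> w]
  have "card (?miss z) \<le> card (?miss w)"
    using z_min w_exchange(1) z \<open>w \<in> S\<close> by blast
  also have "\<dots> \<le> card (?miss z - {p})"
    using w_exchange(2) z \<open>finite Y\<close> by (intro card_mono) auto
  also have "\<dots> < card (?miss z)"
    using \<open>p \<in> Y\<close> \<open>z \<notin> convex hull (Y - {p})\<close> \<open>finite Y\<close> by (intro card_Diff1_less) auto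
  finally show False
    by simp
qed

lemma hull_core_meets_if_not_hollow:
  assumes locally_finite: "\<And>Y. finite Y \<Longrightarrow> finite (S \<inter> convex hull Y)"
    and not_hollow: "\<And>Y. Y \<subseteq> S \<Longrightarrow> finite Y \<Longrightarrow> card Y = n \<Longrightarrow> \<not> hollow S Y"
    and "Y \<subseteq> S" "finite Y" "card Y = n"
  shows "S \<inter> hull_core Y \<noteq> {}"
  using assms(3-5)
proof (induction "card (S \<inter> convex hull Y)" arbitrary: Y rule: less_induct)
  case less
  show ?case
  proof (cases "\<exists>y\<in>Y. y \<in> convex hull (Y - {y})")
    case True
    then show ?thesis
      using in_hull_core_if_in_convex_hull_delete less.prems(1) by blast
  next
    case False
    then have vertices: "\<And>y. y \<in> Y \<Longrightarrow> y \<notin> convex hull (Y - {y})"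
      by blast
    obtain z where "z \<in> S" "z \<in> convex hull (Y - {z})"
      using not_hollow[OF less.prems] unfolding hollow_def by blast
    then have "z \<in> S - Y" "z \<in> convex hull Y"
      using vertices by (metis Diff_iff Diff_empty Diff_insert0)+
    have smaller: "S \<inter> hull_core Y' \<noteq> {}"
      if "Y' \<subseteq> S" "finite Y'" "card Y' = card Y"
        "card (S \<inter> convex hull Y') < card (S \<inter> convex hull Y)" for Y'
      using that less.prems(3) by (intro less.hyps) simp_all
    show ?thesis
      by (rule hull_core_meets_by_exchange[where z\<^sub>0 = z])
        (fact locally_finite less.prems(1,2) vertices smaller \<open>z \<in> S - Y\<close> \<open>z \<in> convex hull Y\<close>)+
  qed
qed

section \<open>The set \<open>A \<times> A\<close>\<close>

lemma of_int_in_A01_iff: "(of_int k :: real) \<in> A01 \<longleftrightarrow> k mod 3 \<in> {0, 1}"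
  unfolding A01_def by auto

lemma A01_sq_cases:
  assumes "p \<in> A01 \<times> A01"
  obtains m n where "p = (of_int m, of_int n)" "m mod 3 \<in> {0, 1}" "n mod 3 \<in> {0, 1}"
proof -
  obtain x y where "p = (x, y)" "x \<in> A01" "y \<in> A01"
    using assms by auto
  then show ?thesis
    using that unfolding A01_def by auto
qed

lemma A01_sq_shift:
  "((of_int (m + 3 * k), of_int (n + 3 * l)) :: real \<times> real) \<in> A01 \<times> A01 \<longleftrightarrow>
    (of_int m, of_int n) \<in> A01 \<times> A01"
  by (simp add: of_int_in_A01_iff del: of_int_add of_int_mult)

lemma finite_A01_sq_inter_bounded:
  assumes "bounded B"
  shows "finite (A01 \<times> A01 \<inter> B)"
proof -
  obtain r where r: "\<And>x. x \<in> B \<Longrightarrow> norm x \<le> r"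
    using assms unfolding bounded_iff by blast
  have "A01 \<times> A01 \<inter> B \<subseteq> {k \<in> \<int>. \<bar>k\<bar> \<le> r} \<times> {k \<in> \<int>. \<bar>k\<bar> \<le> r}"
  proof
    fix p assume p: "p \<in> A01 \<times> A01 \<inter> B"
    then obtain m n where "p = (of_int m, of_int n)"
      using A01_sq_cases[of p] by blast
    moreover have "\<bar>fst p\<bar> \<le> r" "\<bar>snd p\<bar> \<le> r"
      using r[of p] p norm_fst_le[of "fst p" "snd p"] norm_snd_le[where x = "fst p" and y = "snd p"]
      by auto
    ultimately show "p \<in> {k \<in> \<int>. \<bar>k\<bar> \<le> r} \<times> {k \<in> \<int>. \<bar>k\<bar> \<le> r}"
      by auto
  qed
  then show ?thesis
    by (rule finite_subset) (intro finite_cartesian_product finite_abs_int_segment)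
qed

text \<open>For congruent points \<open>c + 3 u\<^sub>i\<close>, the points \<open>(2/3) a + (1/3) b\<close> and the centroid
  are congruent modulo 3 to these seven translates of \<open>c\<close>, with \<open>d = u\<^sub>2 - u\<^sub>1\<close> and
  \<open>e = u\<^sub>3 - u\<^sub>1\<close>.\<close>

lemma A01_sq_seven_translates:
  fixes r s d e d' e' :: int
  defines "A \<equiv> \<lambda>x y. ((of_int x, of_int y) :: real \<times> real) \<in> A01 \<times> A01"
  assumes "A r s"
  shows "A (r + d) (s + d') \<or> A (r - d) (s - d') \<or> A (r + e) (s + e') \<or> A (r - e) (s - e') \<or>
    A (r + e - d) (s + e' - d') \<or> A (r + d - e) (s + d' - e') \<or> A (r + d + e) (s + d' + e')"
proof -
  have "\<forall>r\<in>{0::int, 1}. \<forall>s\<in>{0::int, 1}. \<forall>d\<in>{0::int, 1, 2}. \<forall>e\<in>{0::int, 1, 2}.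
        \<forall>d'\<in>{0::int, 1, 2}. \<forall>e'\<in>{0::int, 1, 2}.
         ((r + d) mod 3 \<in> {0, 1} \<and> (s + d') mod 3 \<in> {0, 1}) \<or>
         ((r - d) mod 3 \<in> {0, 1} \<and> (s - d') mod 3 \<in> {0, 1}) \<or>
         ((r + e) mod 3 \<in> {0, 1} \<and> (s + e') mod 3 \<in> {0, 1}) \<or>
         ((r - e) mod 3 \<in> {0, 1} \<and> (s - e') mod 3 \<in> {0, 1}) \<or>
         ((r + e - d) mod 3 \<in> {0, 1} \<and> (s + e' - d') mod 3 \<in> {0, 1}) \<or>
         ((r + d - e) mod 3 \<in> {0, 1} \<and> (s + d' - e') mod 3 \<in> {0, 1}) \<or>
         ((r + d + e) mod 3 \<in> {0, 1} \<and> (s + d' + e') mod 3 \<in> {0, 1})"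
    by simp
  note table = this[rule_format]
  have residue: "x mod 3 \<in> {0, 1, 2}" for x :: int
    by auto
  have "r mod 3 \<in> {0, 1}" "s mod 3 \<in> {0, 1}"
    using assms(2) by (simp_all add: A_def of_int_in_A01_iff del: of_int_add of_int_diff)
  have mod3_eqs:
    "\<And>a b. (a mod 3 + b mod 3) mod 3 = (a + b) mod (3::int)"
    "\<And>a b. (a mod 3 - b mod 3) mod 3 = (a - b) mod (3::int)"
    "\<And>a b c. (a mod 3 + b mod 3 - c mod 3) mod 3 = (a + b - c) mod (3::int)"
    "\<And>a b c. (a mod 3 + b mod 3 + c mod 3) mod 3 = (a + b + c) mod (3::int)"
    by (rule mod_add_eq mod_diff_eq mod_diff_cong[OF mod_add_eq mod_mod_trivial]
        mod_add_cong[OF mod_add_eq mod_mod_trivial])+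
  show ?thesis
    using table[OF \<open>r mod 3 \<in> {0, 1}\<close> \<open>s mod 3 \<in> {0, 1}\<close> residue residue residue residue]
    unfolding mod3_eqs A_def of_int_in_A01_iff mem_Times_iff fst_conv snd_conv .
qed

definition mod3_class :: "real \<times> real \<Rightarrow> int \<times> int" where
  "mod3_class p = (\<lfloor>fst p\<rfloor> mod 3, \<lfloor>snd p\<rfloor> mod 3)"

lemma mod3_class_A01_sq:
  assumes "p \<in> A01 \<times> A01"
  shows "mod3_class p \<in> {0, 1} \<times> {0, 1}"
proof -
  obtain m n where "p = (of_int m, of_int n)" "m mod 3 \<in> {0, 1}" "n mod 3 \<in> {0, 1}"
    using assms by (rule A01_sq_cases)
  then show ?thesis
    by (auto simp: mod3_class_def)
qed

lemma A01_sq_mod3_class_cases: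
  assumes "p \<in> A01 \<times> A01" "mod3_class p = (r, s)"
  obtains u v where "p = (of_int (3 * u + r), of_int (3 * v + s))"
proof -
  obtain m n where mn: "p = (of_int m, of_int n)"
    using assms(1) A01_sq_cases by blast
  then have "m mod 3 = r" "n mod 3 = s"
    using assms(2) by (auto simp: mod3_class_def)
  then have "3 * (m div 3) + r = m" "3 * (n div 3) + s = n"
    using div_mult_mod_eq[of m 3] div_mult_mod_eq[of n 3] by linarith+
  then show ?thesis
    using that[of "m div 3" "n div 3"] mn by simp
qed

lemma A01_sq_pigeonhole:
  assumes "Y \<subseteq> A01 \<times> A01" "finite Y" "card Y = 9"
  obtains p q t where "p \<in> Y" "q \<in> Y" "t \<in> Y" "p \<noteq> q" "p \<noteq> t" "q \<noteq> t"
    "mod3_class q = mod3_class p" "mod3_class t = mod3_class p"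
proof -
  have "mod3_class \<in> Y \<rightarrow> {0, 1} \<times> {0, 1}"
    using assms(1) mod3_class_A01_sq by blast
  then have "\<exists>c\<in>{0, 1} \<times> {0, 1}.
      card Y \<le> card (mod3_class -` {c} \<inter> Y) * card ({0, 1} \<times> {0, 1} :: (int \<times> int) set)"
    by (rule pigeonhole_card) (use assms(2) in auto)
  then obtain c
    where "card Y \<le> card (mod3_class -` {c} \<inter> Y) * card ({0, 1} \<times> {0, 1} :: (int \<times> int) set)"
    by blast
  then have "3 \<le> card (mod3_class -` {c} \<inter> Y)"
    using assms(3) by (simp add: card_cartesian_product)
  then obtain T where "T \<subseteq> mod3_class -` {c} \<inter> Y" "card T = 3"
    by (meson obtain_subset_with_card_n)
  then obtain p q t where "{p, q, t} \<subseteq> mod3_class -` {c} \<inter> Y" "p \<noteq> q" "p \<noteq> t" "q \<noteq> t"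
    by (metis card_3_iff)
  then show ?thesis
    by (intro that[of p q t]) auto
qed

lemma not_hollow_A01_sq_if_congruent_triple:
  assumes "Y \<subseteq> A01 \<times> A01" "p \<in> Y" "q \<in> Y" "t \<in> Y" "p \<noteq> q" "p \<noteq> t" "q \<noteq> t"
    and "mod3_class q = mod3_class p" "mod3_class t = mod3_class p"
  shows "\<not> hollow (A01 \<times> A01) Y"
proof -
  obtain r s where rs: "mod3_class p = (r, s)"
    by (cases "mod3_class p")
  have "p \<in> A01 \<times> A01" "q \<in> A01 \<times> A01" "t \<in> A01 \<times> A01"
    using assms(1-4) by auto
  then have "(of_int r, of_int s) \<in> A01 \<times> A01"
    using mod3_class_A01_sq[of p] rs by (auto simp: of_int_in_A01_iff)
  have "mod3_class q = (r, s)" "mod3_class t = (r, s)"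
    using assms(8,9) rs by simp_all
  define pt :: "int \<Rightarrow> int \<Rightarrow> real \<times> real" where
    "pt u v = (of_int (3 * u + r), of_int (3 * v + s))" for u v
  obtain u\<^sub>1 v\<^sub>1 where p: "p = pt u\<^sub>1 v\<^sub>1"
    unfolding pt_def using \<open>p \<in> A01 \<times> A01\<close> rs by (rule A01_sq_mod3_class_cases)
  obtain u\<^sub>2 v\<^sub>2 where q: "q = pt u\<^sub>2 v\<^sub>2"
    unfolding pt_def using \<open>q \<in> A01 \<times> A01\<close> \<open>mod3_class q = (r, s)\<close> by (rule A01_sq_mod3_class_cases)
  obtain u\<^sub>3 v\<^sub>3 where t: "t = pt u\<^sub>3 v\<^sub>3"
    unfolding pt_def using \<open>t \<in> A01 \<times> A01\<close> \<open>mod3_class t = (r, s)\<close> by (rule A01_sq_mod3_class_cases)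
  have two_thirds: "\<not> hollow (A01 \<times> A01) Y"
    if "pt u v \<in> Y" "pt u' v' \<in> Y" "pt u v \<noteq> pt u' v'"
      "(of_int (r + (u' - u)), of_int (s + (v' - v))) \<in> A01 \<times> A01" for u v u' v'
  proof (rule not_hollow_two_thirds[OF that(1-3)])
    have "(2/3) *\<^sub>R pt u v + (1/3) *\<^sub>R pt u' v' =
        (of_int (r + (u' - u) + 3 * u), of_int (s + (v' - v) + 3 * v))"
      by (simp add: pt_def) (simp add: field_simps)
    then show "(2/3) *\<^sub>R pt u v + (1/3) *\<^sub>R pt u' v' \<in> A01 \<times> A01"
      using that(4) by (simp only: A01_sq_shift)
  qed
  have centroid: "\<not> hollow (A01 \<times> A01) Y"
    if "(of_int (r + (u\<^sub>2 - u\<^sub>1) + (u\<^sub>3 - u\<^sub>1)), of_int (s + (v\<^sub>2 - v\<^sub>1) + (v\<^sub>3 - v\<^sub>1))) \<in> A01 \<times> A01"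
  proof (rule not_hollow_centroid[OF assms(2-7)])
    have "(1/3) *\<^sub>R (p + q + t) = (of_int (r + (u\<^sub>2 - u\<^sub>1) + (u\<^sub>3 - u\<^sub>1) + 3 * u\<^sub>1),
        of_int (s + (v\<^sub>2 - v\<^sub>1) + (v\<^sub>3 - v\<^sub>1) + 3 * v\<^sub>1))"
      by (simp add: p q t pt_def)
    then show "(1/3) *\<^sub>R (p + q + t) \<in> A01 \<times> A01"
      using that by (simp only: A01_sq_shift)
  qed
  from A01_sq_seven_translates[OF \<open>(of_int r, of_int s) \<in> A01 \<times> A01\<close>,
      of "u\<^sub>2 - u\<^sub>1" "v\<^sub>2 - v\<^sub>1" "u\<^sub>3 - u\<^sub>1" "v\<^sub>3 - v\<^sub>1"]
  show ?thesis
  proof (elim disjE)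
    assume "(of_int (r + (u\<^sub>2 - u\<^sub>1)), of_int (s + (v\<^sub>2 - v\<^sub>1))) \<in> A01 \<times> A01"
    then show ?thesis
      using two_thirds[of u\<^sub>1 v\<^sub>1 u\<^sub>2 v\<^sub>2] assms(2,3,5) p q by simp
  next
    assume "(of_int (r - (u\<^sub>2 - u\<^sub>1)), of_int (s - (v\<^sub>2 - v\<^sub>1))) \<in> A01 \<times> A01"
    then show ?thesis
      using two_thirds[of u\<^sub>2 v\<^sub>2 u\<^sub>1 v\<^sub>1] assms(2,3,5) p q by (simp add: algebra_simps)
  next
    assume "(of_int (r + (u\<^sub>3 - u\<^sub>1)), of_int (s + (v\<^sub>3 - v\<^sub>1))) \<in> A01 \<times> A01"
    then show ?thesis
      using two_thirds[of u\<^sub>1 v\<^sub>1 u\<^sub>3 v\<^sub>3] assms(2,4,6) p t by simp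
  next
    assume "(of_int (r - (u\<^sub>3 - u\<^sub>1)), of_int (s - (v\<^sub>3 - v\<^sub>1))) \<in> A01 \<times> A01"
    then show ?thesis
      using two_thirds[of u\<^sub>3 v\<^sub>3 u\<^sub>1 v\<^sub>1] assms(2,4,6) p t by (simp add: algebra_simps)
  next
    assume "(of_int (r + (u\<^sub>3 - u\<^sub>1) - (u\<^sub>2 - u\<^sub>1)), of_int (s + (v\<^sub>3 - v\<^sub>1) - (v\<^sub>2 - v\<^sub>1)))
      \<in> A01 \<times> A01"
    then show ?thesis
      using two_thirds[of u\<^sub>2 v\<^sub>2 u\<^sub>3 v\<^sub>3] assms(3,4,7) q t by (simp add: algebra_simps)
  next
    assume "(of_int (r + (u\<^sub>2 - u\<^sub>1) - (u\<^sub>3 - u\<^sub>1)), of_int (s + (v\<^sub>2 - v\<^sub>1) - (v\<^sub>3 - v\<^sub>1)))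
      \<in> A01 \<times> A01"
    then show ?thesis
      using two_thirds[of u\<^sub>3 v\<^sub>3 u\<^sub>2 v\<^sub>2] assms(3,4,7) q t by (simp add: algebra_simps)
  next
    assume "(of_int (r + (u\<^sub>2 - u\<^sub>1) + (u\<^sub>3 - u\<^sub>1)), of_int (s + (v\<^sub>2 - v\<^sub>1) + (v\<^sub>3 - v\<^sub>1)))
      \<in> A01 \<times> A01"
    then show ?thesis
      by (rule centroid)
  qed
qed

lemma not_hollow_A01_sq:
  assumes "Y \<subseteq> A01 \<times> A01" "finite Y" "card Y = 9"
  shows "\<not> hollow (A01 \<times> A01) Y"
proof -
  obtain p q t where "p \<in> Y" "q \<in> Y" "t \<in> Y" "p \<noteq> q" "p \<noteq> t" "q \<noteq> t"
    and "mod3_class q = mod3_class p" "mod3_class t = mod3_class p"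
    using assms by (rule A01_sq_pigeonhole)
  then show ?thesis
    by (rule not_hollow_A01_sq_if_congruent_triple[OF assms(1)])
qed

definition halfplane :: "int \<times> int \<times> int \<Rightarrow> (real \<times> real) set" where
  "halfplane = (\<lambda>(a, b, c). {(x, y). of_int a * x + of_int b * y \<le> of_int c})"

lemma convex_halfplane: "convex (halfplane abc)"
proof -
  obtain a b c where abc: "abc = (a, b, c)"
    by (cases abc) auto
  have "halfplane abc = {p. inner (of_int a, of_int b) p \<le> of_int c}"
    by (auto simp: abc halfplane_def inner_prod_def)
  then show ?thesis
    by (simp add: convex_halfspace_le)
qed

lemma lattice_point_in_halfplane_iff:
  "(of_int m, of_int n) \<in> halfplane (a, b, c) \<longleftrightarrow> a * m + b * n \<le> c"
proof -
  have "of_int a * of_int m + of_int b * of_int n = (of_int (a * m + b * n) :: real)"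
    by simp
  then show ?thesis
    unfolding halfplane_def by (simp only: case_prod_conv mem_Collect_eq of_int_le_iff)
qed

definition octagon :: "(real \<times> real) list" where
  "octagon = [(0, 0), (1, 0), (3, 1), (6, 3), (7, 4), (6, 4), (4, 3), (1, 1)]"

text \<open>The \<open>i\<close>-th cut is bounded by the line through the two neighbours of the
  \<open>i\<close>-th vertex.\<close>

definition octagon_cuts :: "(int \<times> int \<times> int) list" where
  "octagon_cuts = [(-1, 0, -1), (1, -3, 0), (3, -5, 3), (3, -4, 5),
                   (1, 0, 6), (-1, 3, 5), (-3, 5, 2), (-3, 4, 0)]"

lemma octagon_in_cuts:
  assumes "i < 8" "j < 8" "j \<noteq> i"
  shows "octagon ! j \<in> halfplane (octagon_cuts ! i)"
  using assms unfolding octagon_def octagon_cuts_def halfplane_def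
  by (auto simp: less_Suc_eq numeral_eq_Suc)

lemma A01_sq_disjoint_octagon_cuts:
  "A01 \<times> A01 \<inter> (\<Inter>i<8. halfplane (octagon_cuts ! i)) = {}"
proof (rule ccontr)
  assume "A01 \<times> A01 \<inter> (\<Inter>i<8. halfplane (octagon_cuts ! i)) \<noteq> {}"
  then obtain p where "p \<in> A01 \<times> A01" and p: "\<forall>i<8. p \<in> halfplane (octagon_cuts ! i)"
    by blast
  from \<open>p \<in> A01 \<times> A01\<close>
  obtain m n where "p = (of_int m, of_int n)" "m mod 3 \<in> {0, 1}" "n mod 3 \<in> {0, 1}"
    by (rule A01_sq_cases)
  with p have "m mod 3 \<in> {0, 1}" "n mod 3 \<in> {0, 1}" "1 \<le> m" "m \<le> 3 * n" "3 * m - 5 * n \<le> 3"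
    "3 * m - 4 * n \<le> 5" "m \<le> 6" "3 * n - m \<le> 5" "5 * n - 3 * m \<le> 2" "4 * n - 3 * m \<le> 0"
    by (auto simp: octagon_cuts_def lattice_point_in_halfplane_iff All_less_Suc numeral_eq_Suc)
  moreover from this have "m = 1 \<or> m = 2 \<or> m = 3 \<or> m = 4 \<or> m = 5 \<or> m = 6" "n = 1 \<or> n = 2 \<or> n = 3"
    by linarith+
  ultimately show False
    by (elim disjE) simp_all
qed

lemma not_helly_prop_A01_sq_7: "\<not> helly_prop (A01 \<times> A01) 7"
proof (rule not_helly_prop_if_hull_core)
  show "set octagon \<subseteq> A01 \<times> A01"
    using of_int_in_A01_iff[of 0] of_int_in_A01_iff[of 1] of_int_in_A01_iff[of 3]
      of_int_in_A01_iff[of 4] of_int_in_A01_iff[of 6] of_int_in_A01_iff[of 7]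
    by (simp add: octagon_def)
  show "card (set octagon) = Suc 7"
    by (simp add: octagon_def)
  have "hull_core (set octagon) \<subseteq> (\<Inter>i\<in>{..<8}. halfplane (octagon_cuts ! i))"
  proof (rule hull_core_subset_INT[where x = "nth octagon"])
    have "length octagon = 8"
      by (simp add: octagon_def)
    then show "set octagon \<subseteq> nth octagon ` {..<8}"
      by (auto simp: set_conv_nth)
    show "set octagon \<noteq> {}"
      by (simp add: octagon_def)
  qed (auto simp: convex_halfplane octagon_in_cuts)
  then show "A01 \<times> A01 \<inter> hull_core (set octagon) = {}"
    using A01_sq_disjoint_octagon_cuts by blast
qed

theorem proposition10:
  shows "helly_number (A01 \<times> A01 :: (real \<times> real) set) = 8"
proof -
  have locally_finite: "finite (A01 \<times> A01 \<inter> convex hull Y)" if "finite Y" for Y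
    using finite_A01_sq_inter_bounded finite_imp_bounded_convex_hull that by blast
  have "helly_prop (A01 \<times> A01) (Suc 7)"
  proof (rule helly_prop_if_hull_core)
    fix Y assume "Y \<subseteq> A01 \<times> A01" "card Y = Suc (Suc 7)"
    moreover from this have "finite Y"
      using card_ge_0_finite by force
    ultimately show "A01 \<times> A01 \<inter> hull_core Y \<noteq> {}"
      using hull_core_meets_if_not_hollow[OF locally_finite not_hollow_A01_sq] by simp
  qed
  then show ?thesis
    using helly_number_eq_Suc[OF _ not_helly_prop_A01_sq_7] by (simp add: numeral_eq_enat)
qed

end
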